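(* Let $\bar{\mathcal{G}}=(\bar{\mathcal{V}},\bar{\mathcal{E}})$ be the edge localization graph of the communication graph $\mathcal{G}$ (as defined in the context). If $\bar{\mathcal{G}}$ has an oriented spanning tree with root vertex $r$, then its directed line graph $L(\bar{\mathcal{G}})=(\bar{\mathcal{E}},L(\bar{\mathcal{E}}))$ has an oriented spanning tree with root edge $(r,v)$ for each neighbor $v$ of $r$ in $\bar{\mathcal{G}}$.
   Context: Setting. There are $N$ agents $\mathcal{V}=\{1,\dots,N\}$ in the plane. A set $\mathcal{S}$ of subtended angle measurements is given: an element $\alpha^{u}_{wv}\in\mathcal{S}$ (with $u,v,w$ distinct agents) is the counterclockwise angle in $[-\pi,\pi)$ measured at agent $u$ from the direction of agent $v$ to the direction of agent $w$; $\alpha^{u}_{wv}\in\mathcal{S}$ if and only if $\alpha^{u}_{vw}=-\alpha^{u}_{wv}\in\mathcal{S}$. The communication graph $\mathcal{G}=(\mathcal{V},\mathcal{E})$ is the directed graph whose edges are exactly the ordered pairs $(u,v),(v,u),(u,w),(w,u)$ for all $\alpha^{u}_{wv}\in\mathcal{S}$; it is symmetric and is assumed connected. Edge localization graph. For each edge $(u,v)\in\mathcal{E}$ such that there is no $w$ with $\alpha^{v}_{wu}\in\mathcal{S}$, introduce a new virtual vertex $\bar v^{u}$ (distinct for distinct such pairs $(u,v)$; co-located with agent $v$). Let $\mathcal{E}^{u}=\{(u,\bar v^{u}),(\bar v^{u},u) : (u,v)\in\mathcal{E},\ \nexists w \text{ with } \alpha^{v}_{wu}\in\mathcal{S}\}$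 and $\mathcal{V}^{u}$ the set of all these virtual vertices. Then $\bar{\mathcal{V}}=\bigl(\mathcal{V}\setminus\{u\in\mathcal{V}: \text{no } \alpha^{u}_{wv}\in\mathcal{S} \text{ for any } v,w\}\bigr)\cup\mathcal{V}^{u}$ and $\bar{\mathcal{E}}=\bigl(\mathcal{E}\setminus\{(u,v),(v,u): (u,v)\in\mathcal{E},\ \nexists w \text{ with }\alpha^{v}_{wu}\in\mathcal{S}\}\bigr)\cup\mathcal{E}^{u}$. A neighbor of $r$ in $\bar{\mathcal{G}}$ is a vertex $v$ with $(r,v)\in\bar{\mathcal{E}}$. For a directed edge $e=(u,v)$, $t(e)=u$, $h(e)=v$. The directed line graph $L(\bar{\mathcal{G}})$ has vertex set $\bar{\mathcal{E}}$ and edge set $L(\bar{\mathcal{E}})=\{(e_1,e_2): h(e_1)=t(e_2)\}$. An oriented spanning tree of a directed graph with root $r$ is an acyclic subgraph containing all vertices in which every vertex other than $r$ has a directed path to $r$. *)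

theory Defs
  imports Main
begin

text \<open>A subtended angle measurement alpha^u_{wv} is represented by the triple (u, w, v):
  measured at agent u, from the direction of v to the direction of w.
  Only the set of available measurements matters for the graph constructions.\<close>

definition comm_edges :: "('a \<times> 'a \<times> 'a) set \<Rightarrow> ('a \<times> 'a) set" where
  "comm_edges S = {e. \<exists>u w v. (u, w, v) \<in> S \<and>
      (e = (u, v) \<or> e = (v, u) \<or> e = (u, w) \<or> e = (w, u))}"

definition no_meas :: "('a \<times> 'a \<times> 'a) set \<Rightarrow> 'a \<Rightarrow> 'a \<Rightarrow> bool" where
  "no_meas S v u \<longleftrightarrow> \<not> (\<exists>w. (v, w, u) \<in> S)"

text \<open>Vertices of the edge localization graph: real agents, and virtual vertices
  Virt u v standing for \<open>v-bar^u\<close> (a copy of v attached to u).\<close>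
datatype 'a lvert = Real 'a | Virt 'a 'a

definition eloc_vertices :: "'a set \<Rightarrow> ('a \<times> 'a \<times> 'a) set \<Rightarrow> 'a lvert set" where
  "eloc_vertices V S =
     Real ` {u \<in> V. \<exists>v w. (u, w, v) \<in> S}
     \<union> {Virt u v | u v. (u, v) \<in> comm_edges S \<and> no_meas S v u}"

definition eloc_edges :: "('a \<times> 'a \<times> 'a) set \<Rightarrow> ('a lvert \<times> 'a lvert) set" where
  "eloc_edges S =
     {(Real a, Real b) | a b. (a, b) \<in> comm_edges S
        \<and> \<not> (\<exists>u v. (u, v) \<in> comm_edges S \<and> no_meas S v u
                 \<and> ((a, b) = (u, v) \<or> (a, b) = (v, u)))}
     \<union> {(Real u, Virt u v) | u v. (u, v) \<in> comm_edges S \<and> no_meas S v u}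
     \<union> {(Virt u v, Real u) | u v. (u, v) \<in> comm_edges S \<and> no_meas S v u}"

definition line_edges :: "('b \<times> 'b) set \<Rightarrow> (('b \<times> 'b) \<times> ('b \<times> 'b)) set" where
  "line_edges E = {(e1, e2). e1 \<in> E \<and> e2 \<in> E \<and> snd e1 = fst e2}"

definition has_oriented_spanning_tree :: "'b set \<Rightarrow> ('b \<times> 'b) set \<Rightarrow> 'b \<Rightarrow> bool" where
  "has_oriented_spanning_tree Vs Es r \<longleftrightarrow> r \<in> Vs \<and>
     (\<exists>T. T \<subseteq> Es \<and> T \<subseteq> Vs \<times> Vs \<and> acyclic T \<and> (\<forall>x\<in>Vs. x \<noteq> r \<longrightarrow> (x, r) \<in> T\<^sup>+))"

end

theory Submission
  imports Defs
begin

text \<open>A digraph has an oriented spanning tree with root r exactly when every vertex reaches r: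
  the first edge of a shortest path to r strictly decreases the distance to r, so these edges
  form an acyclic subgraph. In the line graph, a walk b = x0 \<rightarrow> x1 \<rightarrow> \<dots> \<rightarrow> r lifts to a walk
  (a, b) \<rightarrow> (b, x1) \<rightarrow> \<dots> \<rightarrow> (_, r) \<rightarrow> (r, v), so every edge reaches the root edge (r, v).
  The only property of the edge localization graph that is needed is that the head of every
  edge is a vertex.\<close>

definition dist_to :: "('b \<times> 'b) set \<Rightarrow> 'b \<Rightarrow> 'b \<Rightarrow> nat" where
  "dist_to E r x = (LEAST n. (x, r) \<in> E ^^ n)"

lemma dist_to_decreasing_step:
  assumes "(x, r) \<in> E\<^sup>*" and "x \<noteq> r"
  shows "\<exists>y. (x, y) \<in> E \<and> (y, r) \<in> E\<^sup>* \<and> dist_to E r y < dist_to E r x"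
proof -
  have path: "(x, r) \<in> E ^^ dist_to E r x"
    using assms(1) unfolding dist_to_def by (metis LeastI rtrancl_power)
  then obtain m where m: "dist_to E r x = Suc m"
    using assms(2) by (cases "dist_to E r x") auto
  with path obtain y where y: "(x, y) \<in> E" "(y, r) \<in> E ^^ m"
    by (metis relpow_Suc_D2)
  have "dist_to E r y \<le> m"
    unfolding dist_to_def using y(2) by (rule Least_le)
  with y m show ?thesis
    using relpow_imp_rtrancl by fastforce
qed

lemma oriented_spanning_tree_reaches_root:
  assumes "has_oriented_spanning_tree Vs E r" and "x \<in> Vs"
  shows "(x, r) \<in> E\<^sup>*"
proof -
  obtain T where "T \<subseteq> E" and "x \<noteq> r \<longrightarrow> (x, r) \<in> T\<^sup>+"
    using assms unfolding has_oriented_spanning_tree_def by blast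
  then show ?thesis
    by (metis rtrancl_eq_or_trancl rtrancl_mono subsetD trancl_into_rtrancl)
qed

lemma has_oriented_spanning_treeI:
  assumes root: "r \<in> Vs" and E: "E \<subseteq> Vs \<times> Vs" and reach: "\<forall>x\<in>Vs. (x, r) \<in> E\<^sup>*"
  shows "has_oriented_spanning_tree Vs E r"
proof -
  let ?d = "dist_to E r"
  define parent where "parent x = (SOME y. (x, y) \<in> E \<and> (y, r) \<in> E\<^sup>* \<and> ?d y < ?d x)" for x
  have parent: "(x, parent x) \<in> E" "?d (parent x) < ?d x"
    if "x \<in> Vs" "x \<noteq> r" for x
    using someI_ex[OF dist_to_decreasing_step[of x r E]] reach that
    unfolding parent_def by auto
  define T where "T = {(x, parent x) | x. x \<in> Vs \<and> x \<noteq> r}"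
  have TE: "T \<subseteq> E"
    using parent unfolding T_def by auto
  have "T\<inverse> \<subseteq> inv_image less_than ?d"
    using parent unfolding T_def by auto
  then have "acyclic T"
    by (metis acyclic_converse wf_acyclic wf_inv_image wf_less_than wf_subset)
  moreover have "(x, r) \<in> T\<^sup>+" if "x \<in> Vs" "x \<noteq> r" for x
    using that
  proof (induction "?d x" arbitrary: x rule: less_induct)
    case less
    have edge: "(x, parent x) \<in> T"
      using less.prems unfolding T_def by auto
    have "parent x \<in> Vs"
      using parent(1)[OF less.prems] E by auto
    then have "parent x = r \<or> (parent x, r) \<in> T\<^sup>+"
      using less.hyps parent(2)[OF less.prems] by blast
    with edge show ?case
      by auto
  qed
  ultimately show ?thesis
    unfolding has_oriented_spanning_tree_def using root TE E by blast
qed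

lemma line_edges_reach_of_reach:
  assumes "(b, r) \<in> E\<^sup>*" and "(a, b) \<in> E" and "(r, v) \<in> E"
  shows "((a, b), (r, v)) \<in> (line_edges E)\<^sup>*"
  using assms(1,2)
proof (induction arbitrary: a rule: converse_rtrancl_induct)
  case base
  then show ?case
    using assms(3) unfolding line_edges_def by auto
next
  case (step b c)
  then have "((a, b), (b, c)) \<in> line_edges E"
    unfolding line_edges_def by auto
  with step show ?case
    by (meson converse_rtrancl_into_rtrancl)
qed

theorem line_graph_has_oriented_spanning_tree:
  assumes tree: "has_oriented_spanning_tree Vs E r"
    and heads: "Range E \<subseteq> Vs"
    and root_edge: "(r, v) \<in> E"
  shows "has_oriented_spanning_tree E (line_edges E) (r, v)"
proof (rule has_oriented_spanning_treeI)
  show "line_edges E \<subseteq> E \<times> E"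
    unfolding line_edges_def by auto
  show "\<forall>e\<in>E. (e, (r, v)) \<in> (line_edges E)\<^sup>*"
  proof (clarify)
    fix a b assume ab: "(a, b) \<in> E"
    then have "b \<in> Vs"
      using heads by blast
    then have "(b, r) \<in> E\<^sup>*"
      by (rule oriented_spanning_tree_reaches_root[OF tree])
    then show "((a, b), (r, v)) \<in> (line_edges E)\<^sup>*"
      using ab root_edge by (rule line_edges_reach_of_reach)
  qed
qed (fact root_edge)

lemma Real_in_eloc_vertices:
  assumes "(u, w, v) \<in> S" and "u \<in> V"
  shows "Real u \<in> eloc_vertices V S"
  using assms unfolding eloc_vertices_def by blast

lemma comm_edge_source_measures:
  assumes symS: "\<And>u w v. (u, w, v) \<in> S \<longleftrightarrow> (u, v, w) \<in> S"
    and "(u, v) \<in> comm_edges S" and "no_meas S v u"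
  shows "\<exists>w x. (u, w, x) \<in> S"
  using assms unfolding comm_edges_def no_meas_def by blast

lemma Range_eloc_edges:
  assumes meas_in_V: "\<And>u w v. (u, w, v) \<in> S \<Longrightarrow> u \<in> V"
    and symS: "\<And>u w v. (u, w, v) \<in> S \<longleftrightarrow> (u, v, w) \<in> S"
  shows "Range (eloc_edges S) \<subseteq> eloc_vertices V S"
proof
  fix y assume "y \<in> Range (eloc_edges S)"
  then obtain x where "(x, y) \<in> eloc_edges S" by blast
  then have "(\<exists>a b. y = Real b \<and> \<not> no_meas S b a)
      \<or> (\<exists>u v. y = Virt u v \<and> (u, v) \<in> comm_edges S \<and> no_meas S v u)
      \<or> (\<exists>u v. y = Real u \<and> (u, v) \<in> comm_edges S \<and> no_meas S v u)"
    unfolding eloc_edges_def by (auto 0 4)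
  then show "y \<in> eloc_vertices V S"
  proof (elim disjE exE conjE)
    fix a b assume y: "y = Real b" and "\<not> no_meas S b a"
    then obtain w where m: "(b, w, a) \<in> S"
      unfolding no_meas_def by blast
    show ?thesis
      unfolding y using Real_in_eloc_vertices[OF m meas_in_V[OF m]] .
  next
    fix u v assume "y = Virt u v" "(u, v) \<in> comm_edges S" "no_meas S v u"
    then show ?thesis
      unfolding eloc_vertices_def by blast
  next
    fix u v assume y: "y = Real u" and uv: "(u, v) \<in> comm_edges S" "no_meas S v u"
    from comm_edge_source_measures[OF symS uv]
    obtain w x where m: "(u, w, x) \<in> S"
      by blast
    show ?thesis
      unfolding y using Real_in_eloc_vertices[OF m meas_in_V[OF m]] .
  qed
qed

theorem lemma5:
  fixes V :: "'a set" and S :: "('a \<times> 'a \<times> 'a) set" and r :: "'a lvert"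
  assumes finV: "finite V"
    and wf: "\<And>u w v. (u, w, v) \<in> S \<Longrightarrow> u \<in> V \<and> v \<in> V \<and> w \<in> V \<and> u \<noteq> v \<and> u \<noteq> w \<and> v \<noteq> w"
    and symS: "\<And>u w v. (u, w, v) \<in> S \<longleftrightarrow> (u, v, w) \<in> S"
    and conn: "\<forall>x\<in>V. \<forall>y\<in>V. (x, y) \<in> (comm_edges S)\<^sup>*"
    and tree: "has_oriented_spanning_tree (eloc_vertices V S) (eloc_edges S) r"
  shows "\<forall>v. (r, v) \<in> eloc_edges S \<longrightarrow>
           has_oriented_spanning_tree (eloc_edges S) (line_edges (eloc_edges S)) (r, v)"
proof -
  have "Range (eloc_edges S) \<subseteq> eloc_vertices V S"
    using wf symS by (intro Range_eloc_edges) blast+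
  from line_graph_has_oriented_spanning_tree[OF tree this] show ?thesis
    by blast
qed

end
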